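(* There is an absolute constant $c>0$ such that the following holds. Let $d\ge2$, let $G$ be any $d$-regular graph on $n$ vertices, let $F$ be regular, and let $p=F^{-1}(1-1/d)\cdot(1-1/d)^{d}$. Then $$\inf_{\mathbf{T}\in\mathcal{N}_{p\cdot\mathbf{1}}}\mathcal{R}(p\cdot\mathbf{1},\mathbf{T})\ \ge\ c\cdot\sup_{p'>0}\ \inf_{\mathbf{T}\in\mathcal{N}_{p'\cdot\mathbf{1}}}\mathcal{R}(p'\cdot\mathbf{1},\mathbf{T}).$$ (Note that $p$ depends only on $d$ and $F$, not on the structure of $G$.)
   Context: Public-goods pricing game: $n$ buyers are the vertices of an undirected graph $G=([n],E)$; $N(i)=\{j:(i,j)\in E\}$ (so $i\notin N(i)$); $G$ is $d$-regular if $|N(i)|=d$ for all $i$. Values i.i.d. with cumulative distribution function $F$ on $[0,\infty)$, $F(\infty)=1$. An equilibrium for price vector $\mathbf{p}$ is $\mathbf{T}\in[0,\infty]^n$ (buyer $i$ purchases iff $v_i\ge T_i$) with $T_i=p_i/\prod_{j\in N(i)}F(T_j)$ for all $i$ (convention $c/0=\infty$); $\mathcal{N}_{\mathbf{p}}$ is the set of equilibria; $\mathcal{R}(\mathbf{p},\mathbf{T})=\sum_ip_i(1-F(T_i))$; $p\cdot\mathbf{1}$ is the uniform price vector. $F$ is regular: atomless, supported on an interval in $[0,\infty)$ with positive density $f$ there, and $\phi(x)=x-\frac{1-F(x)}{f(x)}$ non-decreasing. $F^{-1}(q)=\min\{x:F(x)=q\}$. *)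

theory Defs
  imports "HOL-Analysis.Analysis"
begin

definition graph_on :: "nat \<Rightarrow> (nat \<Rightarrow> nat \<Rightarrow> bool) \<Rightarrow> bool" where
  "graph_on n E \<longleftrightarrow> (\<forall>i j. E i j \<longrightarrow> i < n \<and> j < n) \<and> (\<forall>i j. E i j \<longrightarrow> E j i) \<and> (\<forall>i. \<not> E i i)"

definition nbhd :: "nat \<Rightarrow> (nat \<Rightarrow> nat \<Rightarrow> bool) \<Rightarrow> nat \<Rightarrow> nat set" where
  "nbhd n E i = {j. j < n \<and> E i j}"

definition d_regular :: "nat \<Rightarrow> (nat \<Rightarrow> nat \<Rightarrow> bool) \<Rightarrow> nat \<Rightarrow> bool" where
  "d_regular n E d \<longleftrightarrow> (\<forall>i<n. card (nbhd n E i) = d)"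

(* Regular distribution: CDF F, density f, support interval I *)
definition regular_dist :: "(real \<Rightarrow> real) \<Rightarrow> (real \<Rightarrow> real) \<Rightarrow> real set \<Rightarrow> bool" where
  "regular_dist F f I \<longleftrightarrow>
     is_interval I \<and> I \<subseteq> {0..} \<and> interior I \<noteq> {} \<and>
     mono F \<and> continuous_on UNIV F \<and> (F \<longlongrightarrow> 1) at_top \<and>
     (\<forall>x. (\<forall>y\<in>I. x < y) \<longrightarrow> F x = 0) \<and>
     (\<forall>x. (\<forall>y\<in>I. y < x) \<longrightarrow> F x = 1) \<and>
     (\<forall>x\<in>interior I. (F has_real_derivative f x) (at x) \<and> f x > 0) \<and>
     mono_on (interior I) (\<lambda>x. x - (1 - F x) / f x)"

definition Fe :: "(real \<Rightarrow> real) \<Rightarrow> ereal \<Rightarrow> real" where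
  "Fe F t = (case t of ereal x \<Rightarrow> F x | PInfty \<Rightarrow> 1 | MInfty \<Rightarrow> 0)"

definition Finv :: "(real \<Rightarrow> real) \<Rightarrow> real \<Rightarrow> real" where
  "Finv F q = (LEAST x. F x = q)"

definition equilibria :: "nat \<Rightarrow> (nat \<Rightarrow> nat \<Rightarrow> bool) \<Rightarrow> (real \<Rightarrow> real) \<Rightarrow> (nat \<Rightarrow> real) \<Rightarrow> (nat \<Rightarrow> ereal) set" where
  "equilibria n E F p = {T. \<forall>i<n. 0 \<le> T i \<and>
      T i = (let q = (\<Prod>j\<in>nbhd n E i. Fe F (T j)) in
             if q = 0 then PInfty else ereal (p i / q))}"

definition revenue :: "nat \<Rightarrow> (real \<Rightarrow> real) \<Rightarrow> (nat \<Rightarrow> real) \<Rightarrow> (nat \<Rightarrow> ereal) \<Rightarrow> real" where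
  "revenue n F p T = (\<Sum>i<n. p i * (1 - Fe F (T i)))"

definition worst_rev :: "nat \<Rightarrow> (nat \<Rightarrow> nat \<Rightarrow> bool) \<Rightarrow> (real \<Rightarrow> real) \<Rightarrow> real \<Rightarrow> ereal" where
  "worst_rev n E F p = (INF T\<in>equilibria n E F (\<lambda>_. p). ereal (revenue n F (\<lambda>_. p) T))"

end

theory Submission
  imports Defs
begin

text \<open>
  Write \<open>q = 1 - 1/d\<close> and \<open>x\<^sub>s = F\<^sup>-\<^sup>1(q)\<close>, so that \<open>p = x\<^sub>s q\<^sup>d\<close>.
  In any equilibrium at price \<open>p\<close> every buyer either buys with probability at least \<open>1/d\<close>,
  or has \<open>F(T\<^sub>i) > q\<close>, which forces the product of its neighbours' non-purchase probabilities
  below \<open>q\<^sup>d \<le> 1/2\<close>; then by the Weierstrass product inequality its neighbours buy at least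
  \<open>1/2\<close> in total. Double counting over the \<open>d\<close>-regular graph gives at least \<open>n/(4d)\<close> expected
  sales, i.e. revenue at least \<open>p n/(4d) \<ge> x\<^sub>s n/(36d)\<close> since \<open>q\<^sup>d \<ge> 1/9\<close>.

  Conversely, every uniform price \<open>p'\<close> admits the symmetric equilibrium \<open>T\<^sub>i = t\<close> with
  \<open>t F(t)\<^sup>d = p'\<close>. Regularity (a non-decreasing virtual value) implies \<open>F(1 - F) \<le> x f\<close>, so
  \<open>x (1 - F(x)) / F(x)\<close> is non-increasing, and this bounds the revenue \<open>n t F(t)\<^sup>d (1 - F(t))\<close>
  by \<open>2 n x\<^sub>s / d\<close>. Hence \<open>c = 1/72\<close> works.
\<close>

definition virtual_value :: "(real \<Rightarrow> real) \<Rightarrow> (real \<Rightarrow> real) \<Rightarrow> real \<Rightarrow> real" where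
  "virtual_value F f x = x - (1 - F x) / f x"

context
  fixes F f :: "real \<Rightarrow> real" and I :: "real set"
  assumes regular: "regular_dist F f I"
begin

lemma regular_dist_mono: "mono F"
  using regular by (simp add: regular_dist_def)

lemma regular_dist_continuous: "continuous_on UNIV F"
  using regular by (simp add: regular_dist_def)

lemma regular_dist_isCont: "isCont F x"
  using regular_dist_continuous by (simp add: continuous_on_eq_continuous_at)

lemma regular_dist_tendsto_1: "(F \<longlongrightarrow> 1) at_top"
  using regular by (simp add: regular_dist_def)

lemma regular_dist_has_derivative:
  "x \<in> interior I \<Longrightarrow> (F has_real_derivative f x) (at x)"
  using regular by (simp add: regular_dist_def)

lemma regular_dist_density_pos: "x \<in> interior I \<Longrightarrow> f x > 0"
  using regular by (simp add: regular_dist_def)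

lemma regular_dist_virtual_value_mono: "mono_on (interior I) (virtual_value F f)"
  using regular by (simp add: regular_dist_def virtual_value_def[abs_def])

lemma regular_dist_support_nonneg: "I \<subseteq> {0..}"
  using regular by (simp add: regular_dist_def)

lemma regular_dist_interior_nonneg: "x \<in> interior I \<Longrightarrow> x \<ge> 0"
  using regular_dist_support_nonneg interior_subset by fastforce

lemma regular_dist_below_support: "\<forall>y\<in>I. x < y \<Longrightarrow> F x = 0"
  using regular by (simp add: regular_dist_def)

lemma regular_dist_above_support: "\<forall>y\<in>I. y < x \<Longrightarrow> F x = 1"
  using regular by (simp add: regular_dist_def)

lemma regular_dist_neg: "x < 0 \<Longrightarrow> F x = 0"
proof -
  assume "x < 0"
  then have "\<forall>y\<in>I. x < y" using regular_dist_support_nonneg by force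
  then show "F x = 0" by (rule regular_dist_below_support)
qed

lemma regular_dist_nonneg: "F x \<ge> 0"
  using monoD[OF regular_dist_mono, of "min x (-1)" x] regular_dist_neg[of "min x (-1)"] by simp

lemma regular_dist_le_1: "F x \<le> 1"
proof (rule tendsto_le[OF trivial_limit_at_top_linorder regular_dist_tendsto_1 tendsto_const])
  show "\<forall>\<^sub>F y in at_top. F x \<le> F y"
    using monoD[OF regular_dist_mono] by (auto simp: eventually_at_top_linorder)
qed

lemma Fe_nonneg: "Fe F t \<ge> 0" and Fe_le_1: "Fe F t \<le> 1"
  using regular_dist_nonneg regular_dist_le_1 by (cases t; simp add: Fe_def)+

lemma regular_dist_exceeds: "r < 1 \<Longrightarrow> \<exists>b. F b > r"
  using order_tendstoD(1)[OF regular_dist_tendsto_1] by (metis eventually_at_top_linorder order_refl)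

lemma regular_dist_attains:
  assumes "0 \<le> e" "e \<le> F b"
  shows "\<exists>s\<le>b. F s = e"
proof -
  have "F (min b (-1)) \<le> e" using regular_dist_neg[of "min b (-1)"] assms(1) by simp
  then obtain s where "s \<le> b" "F s = e"
    using IVT[of F "min b (-1)" e b, OF _ assms(2) min.cobounded1] regular_dist_isCont by blast
  then show ?thesis by blast
qed

text \<open>These points form an open subset of the support.\<close>
lemma regular_dist_interior: "{x. 0 < F x \<and> F x < 1} \<subseteq> interior I"
proof (rule interior_maximal)
  show "open {x. 0 < F x \<and> F x < 1}"
    using open_vimage[OF open_greaterThanLessThan regular_dist_continuous, of 0 1] by (simp add: vimage_def)
  show "{x. 0 < F x \<and> F x < 1} \<subseteq> I"
  proof
    fix x assume x: "x \<in> {x. 0 < F x \<and> F x < 1}"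
    have "F x \<noteq> 0" "F x \<noteq> 1" using x by auto
    then have "\<not> (\<forall>y\<in>I. x < y)" "\<not> (\<forall>y\<in>I. y < x)"
      using regular_dist_below_support regular_dist_above_support by metis+
    then obtain a b where "a \<in> I" "a \<le> x" "b \<in> I" "x \<le> b"
      by (auto simp: not_less)
    moreover have "is_interval I" using regular by (simp add: regular_dist_def)
    ultimately show "x \<in> I" by (meson mem_is_interval_1_I)
  qed
qed

lemma regular_dist_interior_between:
  assumes "a \<le> y" "y \<le> b" "0 < F a" "F b < 1"
  shows "y \<in> interior I"
proof -
  have "F a \<le> F y" "F y \<le> F b" using assms(1,2) regular_dist_mono by (auto dest: monoD)
  then show ?thesis using regular_dist_interior assms(3,4) by auto
qed

lemma regular_dist_shifted_survival_mono:
  assumes "s \<le> x" "0 < F s" "F x < 1"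
  shows "(1 - F s) * (s - virtual_value F f x) \<le> (1 - F x) * (x - virtual_value F f x)"
proof (rule DERIV_nonneg_imp_nondecreasing[OF assms(1)])
  fix y assume y: "s \<le> y" "y \<le> x"
  let ?c = "virtual_value F f x"
  have yI: "y \<in> interior I" using regular_dist_interior_between[OF y assms(2,3)] .
  have fy: "f y > 0" using regular_dist_density_pos[OF yI] .
  have "virtual_value F f y \<le> ?c"
    using regular_dist_virtual_value_mono yI regular_dist_interior_between[OF assms(1) order_refl assms(2,3)] y(2)
    by (auto dest: mono_onD)
  then have "(y - ?c) * f y \<le> 1 - F y"
    using fy by (simp add: virtual_value_def field_simps)
  moreover have "((\<lambda>y. (1 - F y) * (y - ?c)) has_real_derivative (1 - F y) - f y * (y - ?c)) (at y)"
    using regular_dist_has_derivative[OF yI] by (auto intro!: derivative_eq_intros)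
  ultimately show "\<exists>D. ((\<lambda>y. (1 - F y) * (y - ?c)) has_real_derivative D) (at y) \<and> 0 \<le> D"
    by (auto simp: algebra_simps)
qed

text \<open>Letting \<open>F s \<rightarrow> 0\<close> in the previous lemma (with \<open>s \<ge> 0\<close>) bounds \<open>-\<phi>(x)\<close>
  by \<open>(1 - F x) (x - \<phi>(x))\<close>; unfolding \<open>\<phi>\<close> gives the claim.\<close>
lemma regular_dist_cdf_survival_le:
  assumes xI: "x \<in> interior I"
  shows "F x * (1 - F x) \<le> x * f x"
proof -
  have x0: "x \<ge> 0" and fx: "f x > 0"
    using regular_dist_interior_nonneg[OF xI] regular_dist_density_pos[OF xI] by auto
  show ?thesis
  proof (cases "0 < F x \<and> F x < 1")
    case False
    then have "F x = 0 \<or> F x = 1" using regular_dist_nonneg[of x] regular_dist_le_1[of x] by auto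
    then show ?thesis using x0 fx by auto
  next
    case True
    define c where "c = virtual_value F f x"
    define V where "V = (1 - F x) * (x - c)"
    have "(1 - e) * (- c) \<le> V" if e: "0 < e" "e < F x" for e
    proof -
      obtain s where s: "s \<le> x" "F s = e"
        using regular_dist_attains[of e x] e by auto
      have "s \<ge> 0"
        using regular_dist_interior_nonneg regular_dist_interior True s e by auto
      then have "(1 - e) * (- c) \<le> (1 - e) * (s - c)"
        using e True by (intro mult_left_mono) auto
      also have "\<dots> = (1 - F s) * (s - c)" using s(2) by simp
      also have "\<dots> \<le> V"
        unfolding V_def c_def using regular_dist_shifted_survival_mono[of s x] s e True by auto
      finally show ?thesis .
    qed
    then have "\<forall>\<^sub>F e in at_right 0. (1 - e) * (- c) \<le> V"
      using True by (auto simp: eventually_at_right_field intro!: exI[of _ "F x"])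
    moreover have "((\<lambda>e. (1 - e) * (- c)) \<longlongrightarrow> (1 - 0) * (- c)) (at_right 0)"
      by (intro tendsto_intros)
    ultimately have "- c \<le> V"
      using tendsto_le[OF trivial_limit_at_right_real tendsto_const] by fastforce
    then have "F x * (1 - F x) * f x \<le> x * f x * f x"
      using fx unfolding V_def c_def virtual_value_def by (simp add: field_simps)
    then show ?thesis using fx by (rule mult_right_le_imp_le)
  qed
qed

lemma regular_dist_revenue_odds_antimono:
  assumes "a \<le> t" "0 < F a" "F t < 1"
  shows "t * (1 - F t) / F t \<le> a * (1 - F a) / F a"
proof (rule DERIV_nonpos_imp_nonincreasing[OF assms(1)])
  fix y assume y: "a \<le> y" "y \<le> t"
  have yI: "y \<in> interior I" using regular_dist_interior_between[OF y assms(2,3)] .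
  have Fy: "F y > 0" using assms(2) monoD[OF regular_dist_mono y(1)] by simp
  have "((\<lambda>y. y * (1 - F y) / F y) has_real_derivative
          ((1 - F y - y * f y) * F y - y * (1 - F y) * f y) / (F y * F y)) (at y)"
    using regular_dist_has_derivative[OF yI] Fy by (auto intro!: derivative_eq_intros)
  moreover have "(1 - F y - y * f y) * F y - y * (1 - F y) * f y = F y * (1 - F y) - y * f y"
    by (simp add: algebra_simps)
  ultimately show "\<exists>D. ((\<lambda>y. y * (1 - F y) / F y) has_real_derivative D) (at y) \<and> D \<le> 0"
    using regular_dist_cdf_survival_le[OF yI] by (auto intro!: divide_nonpos_nonneg)
qed

lemma regular_dist_Finv:
  assumes "0 < q" "q < 1"
  shows "F (Finv F q) = q" "Finv F q > 0"
proof -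
  let ?S = "{x. F x = q}"
  obtain b where "F b > q" using regular_dist_exceeds[OF assms(2)] by blast
  then have ne: "?S \<noteq> {}" using regular_dist_attains[of q b] assms by auto
  have bdd: "bdd_below ?S"
    using regular_dist_neg assms(1) by (intro bdd_belowI[of _ 0]) (force simp: not_le[symmetric])
  have "closed ?S"
    using continuous_closed_preimage_constant[OF regular_dist_continuous closed_UNIV] by simp
  then have inS: "Inf ?S \<in> ?S" using closed_contains_Inf[OF ne bdd] by blast
  have Finv: "Finv F q = Inf ?S"
    unfolding Finv_def using inS bdd by (intro Least_equality) (auto intro: cInf_lower)
  then show F: "F (Finv F q) = q" using inS by simp
  have "F 0 = 0"
  proof (rule tendsto_unique[OF trivial_limit_at_left_real])
    show "(F \<longlongrightarrow> F 0) (at_left 0)"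
      using regular_dist_isCont[of 0] by (simp add: isCont_def filterlim_at_split)
    have "\<forall>\<^sub>F x in at_left 0. 0 = F x"
      using regular_dist_neg by (auto simp: eventually_at_left_field intro!: exI[of _ "-1"])
    then show "(F \<longlongrightarrow> 0) (at_left 0)"
      by (rule Lim_transform_eventually[OF tendsto_const])
  qed
  then show "Finv F q > 0"
    using F assms(1) monoD[OF regular_dist_mono, of "Finv F q" 0] by (cases "Finv F q > 0") auto
qed

end

lemma power_mult_one_minus_le:
  fixes a :: real
  assumes "0 \<le> a" "a \<le> 1"
  shows "real d * (a ^ d * (1 - a)) \<le> 1"
proof -
  have "real d * a ^ d = (\<Sum>k<d. a ^ d)" by simp
  also have "\<dots> \<le> (\<Sum>k<d. a ^ k)"
    using assms by (intro sum_mono power_decreasing) auto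
  finally have "real d * a ^ d * (1 - a) \<le> (\<Sum>k<d. a ^ k) * (1 - a)"
    using assms by (intro mult_right_mono) auto
  also have "\<dots> = 1 - a ^ d" by (simp add: one_diff_power_eq mult.commute)
  also have "\<dots> \<le> 1" using assms by simp
  finally show ?thesis by (simp add: mult.assoc)
qed

lemma one_minus_inverse_power_le_half:
  assumes "d \<ge> 2"
  shows "(1 - 1 / real d) ^ d \<le> 1 / 2"
proof -
  have "(1 - 1 / real d) ^ d \<le> exp (- (1 / real d)) ^ d"
    using assms exp_ge_add_one_self[of "- (1 / real d)"] by (intro power_mono) auto
  also have "\<dots> = exp (- 1)" using assms by (simp add: exp_of_nat_mult[symmetric])
  also have "\<dots> \<le> 1 / 2"
    using exp_ge_add_one_self[of 1] by (simp add: exp_minus field_simps)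
  finally show ?thesis .
qed

lemma one_minus_inverse_power_ge_ninth:
  assumes "d \<ge> 2"
  shows "(1 - 1 / real d) ^ d \<ge> 1 / 9"
proof -
  have d1: "real d - 1 > 0" using assms by simp
  have "(1 / (1 - 1 / real d)) ^ d = (1 + 1 / (real d - 1)) ^ d"
    using d1 by (simp add: field_simps)
  also have "\<dots> \<le> exp (1 / (real d - 1)) ^ d"
    using d1 by (intro power_mono exp_ge_add_one_self) auto
  also have "\<dots> = exp (real d / (real d - 1))" by (simp add: exp_of_nat_mult[symmetric])
  also have "\<dots> \<le> exp 1 ^ 2"
    using d1 assms by (simp add: exp_of_nat_mult[symmetric] field_simps)
  also have "\<dots> \<le> 3 ^ 2" using exp_le by (intro power_mono) auto
  finally have "1 / (1 - 1 / real d) ^ d \<le> 9" by (simp add: power_divide)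
  moreover have "(1 - 1 / real d) ^ d > 0" using assms by (simp add: field_simps)
  ultimately show ?thesis by (simp add: field_simps)
qed

lemma prod_ge_one_minus_sum:
  fixes a :: "'a \<Rightarrow> real"
  assumes "finite A" "\<And>j. j \<in> A \<Longrightarrow> 0 \<le> a j \<and> a j \<le> 1"
  shows "1 - (\<Sum>j\<in>A. 1 - a j) \<le> (\<Prod>j\<in>A. a j)"
  using assms
proof (induction A rule: finite_induct)
  case (insert x A)
  then have IH: "1 - (\<Sum>j\<in>A. 1 - a j) \<le> (\<Prod>j\<in>A. a j)" and ax: "0 \<le> a x" "a x \<le> 1"
    by auto
  have S: "0 \<le> (\<Sum>j\<in>A. 1 - a j)" using insert.prems by (intro sum_nonneg) auto
  have "1 - ((1 - a x) + (\<Sum>j\<in>A. 1 - a j)) \<le> a x * (1 - (\<Sum>j\<in>A. 1 - a j))"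
    using mult_left_le_one_le[OF S ax] by (simp add: algebra_simps)
  also have "\<dots> \<le> a x * (\<Prod>j\<in>A. a j)" using IH ax by (intro mult_left_mono) auto
  finally show ?case using insert by simp
qed simp

lemma sum_nbhd_regular:
  fixes h :: "nat \<Rightarrow> real"
  assumes "graph_on n E" "d_regular n E d"
  shows "(\<Sum>i<n. \<Sum>j\<in>nbhd n E i. h j) = real d * (\<Sum>j<n. h j)"
proof -
  have sym: "E i j = E j i" for i j using assms(1) unfolding graph_on_def by blast
  have nbhd: "nbhd n E i = {j\<in>{..<n}. E i j}" for i by (auto simp: nbhd_def)
  have "(\<Sum>i<n. \<Sum>j\<in>nbhd n E i. h j) = (\<Sum>i<n. \<Sum>j<n. if E i j then h j else 0)"
    unfolding nbhd sum.inter_filter[OF finite_lessThan] ..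
  also have "\<dots> = (\<Sum>j<n. \<Sum>i<n. if E j i then h j else 0)"
    by (subst sum.swap) (simp add: sym)
  also have "\<dots> = (\<Sum>j<n. real (card (nbhd n E j)) * h j)"
    unfolding nbhd sum.inter_filter[OF finite_lessThan, symmetric] by simp
  also have "\<dots> = real d * (\<Sum>j<n. h j)"
    using assms(2) by (simp add: d_regular_def sum_distrib_left)
  finally show ?thesis .
qed

lemma equilibrium_nbhd_prod_lt:
  assumes "mono F" and T: "T \<in> equilibria n E F (\<lambda>_. p)" and "i < n" "0 < p" "0 < x"
    and buys: "F x < Fe F (T i)"
  shows "(\<Prod>j\<in>nbhd n E i. Fe F (T j)) < p / x"
proof -
  define P where "P = (\<Prod>j\<in>nbhd n E i. Fe F (T j))"
  show ?thesis
  proof (cases "P \<le> 0")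
    case True
    moreover have "0 < p / x" using assms(4,5) by simp
    ultimately show ?thesis unfolding P_def by linarith
  next
    case False
    then have "T i = ereal (p / P)"
      using T \<open>i < n\<close> unfolding equilibria_def P_def Let_def by auto
    then have "F x < F (p / P)" using buys by (simp add: Fe_def)
    then have "x < p / P" using \<open>mono F\<close> by (meson monoD not_le)
    then show ?thesis using False assms(5) by (simp add: P_def field_simps)
  qed
qed

lemma equilibrium_local_demand:
  assumes R: "regular_dist F f I" and d: "d \<ge> 2"
    and xs: "F xs = 1 - 1 / real d" "0 < xs"
    and T: "T \<in> equilibria n E F (\<lambda>_. xs * (1 - 1 / real d) ^ d)" and i: "i < n"
  shows "1 / 2 \<le> real d * (1 - Fe F (T i)) + (\<Sum>j\<in>nbhd n E i. 1 - Fe F (T j))"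
proof -
  define q where "q = 1 - 1 / real d"
  have q: "0 < q" "q ^ d \<le> 1 / 2"
    using d one_minus_inverse_power_le_half[OF d] unfolding q_def by (auto simp: field_simps)
  have S: "0 \<le> (\<Sum>j\<in>nbhd n E i. 1 - Fe F (T j))"
    using Fe_le_1[OF R] by (intro sum_nonneg) auto
  show ?thesis
  proof (cases "Fe F (T i) \<le> q")
    case True
    then have "1 \<le> real d * (1 - Fe F (T i))" using d by (simp add: q_def field_simps)
    then show ?thesis using S by linarith
  next
    case False
    have "F xs < Fe F (T i)" using False xs(1) by (simp add: q_def)
    moreover have "0 < xs * q ^ d" using q xs(2) by simp
    ultimately have "(\<Prod>j\<in>nbhd n E i. Fe F (T j)) < xs * q ^ d / xs"
      using equilibrium_nbhd_prod_lt[OF regular_dist_mono[OF R] T[folded q_def] i _ xs(2)] by blast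
    moreover have "1 - (\<Sum>j\<in>nbhd n E i. 1 - Fe F (T j)) \<le> (\<Prod>j\<in>nbhd n E i. Fe F (T j))"
      using Fe_nonneg[OF R] Fe_le_1[OF R] by (intro prod_ge_one_minus_sum) (auto simp: nbhd_def)
    moreover have "0 \<le> real d * (1 - Fe F (T i))" using Fe_le_1[OF R] by simp
    ultimately show ?thesis using q xs(2) by simp
  qed
qed

lemma equilibrium_revenue_lower_bound:
  assumes R: "regular_dist F f I" and G: "graph_on n E" "d_regular n E d" and d: "d \<ge> 2"
    and xs: "F xs = 1 - 1 / real d" "0 < xs"
    and T: "T \<in> equilibria n E F (\<lambda>_. p)" and p: "p = xs * (1 - 1 / real d) ^ d"
  shows "p * real n / (4 * real d) \<le> revenue n F (\<lambda>_. p) T"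
proof -
  have dpos: "real d > 0" using d by simp
  have "real n / 2 = (\<Sum>i<n. 1 / 2 :: real)" by simp
  also have "\<dots> \<le> (\<Sum>i<n. real d * (1 - Fe F (T i)) + (\<Sum>j\<in>nbhd n E i. 1 - Fe F (T j)))"
    using equilibrium_local_demand[OF R d xs T[unfolded p]] by (intro sum_mono) auto
  also have "\<dots> = 2 * real d * (\<Sum>i<n. 1 - Fe F (T i))"
    by (simp add: sum.distrib sum_distrib_left sum_nbhd_regular[OF G] mult.assoc)
  finally have "real n / (4 * real d) \<le> (\<Sum>i<n. 1 - Fe F (T i))"
    using dpos by (simp add: field_simps)
  moreover have "0 \<le> p" using p xs d by simp
  ultimately have "p * (real n / (4 * real d)) \<le> p * (\<Sum>i<n. 1 - Fe F (T i))"
    by (rule mult_left_mono)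
  then show ?thesis by (simp add: revenue_def sum_distrib_left)
qed

lemma symmetric_equilibrium_exists:
  assumes R: "regular_dist F f I" and "d_regular n E d" and "0 < p"
  obtains t where "0 \<le> t" "t * F t ^ d = p" "(\<lambda>_. ereal t) \<in> equilibria n E F (\<lambda>_. p)"
proof -
  obtain b where b: "F b > 1 / 2" using regular_dist_exceeds[OF R, of "1 / 2"] by auto
  define c where "c = max b (p * 2 ^ d)"
  have "p \<le> c * (1 / 2) ^ d" unfolding c_def by (simp add: field_simps le_max_iff_disj)
  also have "\<dots> \<le> c * F c ^ d"
    using b monoD[OF regular_dist_mono[OF R], of b c] assms(3)
    by (intro mult_left_mono power_mono) (auto simp: c_def le_max_iff_disj)
  finally obtain t where t: "0 \<le> t" "t * F t ^ d = p"
    using IVT[of "\<lambda>t. t * F t ^ d" 0 p c] assms(3) regular_dist_isCont[OF R]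
    by (force intro!: continuous_intros simp: c_def le_max_iff_disj)
  moreover have "F t ^ d \<noteq> 0" using t assms(3) by (metis less_irrefl mult_zero_right)
  then have "(\<lambda>_. ereal t) \<in> equilibria n E F (\<lambda>_. p)"
    using t assms(2) by (auto simp: equilibria_def d_regular_def Fe_def)
  ultimately show ?thesis using that by blast
qed

text \<open>Below \<open>x\<^sub>s\<close> we use \<open>a\<^sup>d (1 - a) \<le> 1/d\<close>; above it, the monotonicity of
  \<open>t (1 - F t) / F t\<close> compares with the value at \<open>x\<^sub>s\<close>, which is \<open>x\<^sub>s / (d - 1)\<close>.\<close>
lemma symmetric_revenue_le:
  assumes R: "regular_dist F f I" and d: "d \<ge> 2"
    and xs: "F xs = 1 - 1 / real d" "0 < xs" and t: "0 \<le> t"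
  shows "t * F t ^ d * (1 - F t) \<le> 2 * xs / real d"
proof -
  define q where "q = 1 - 1 / real d"
  have q: "0 < q" "1 / 2 \<le> q" and dpos: "real d > 0"
    using d by (auto simp: q_def field_simps)
  have F01: "0 \<le> F t" "F t \<le> 1" using regular_dist_nonneg[OF R] regular_dist_le_1[OF R] by auto
  consider "t \<le> xs" | "xs < t" "F t = 1" | "xs < t" "F t < 1" using F01 by linarith
  then show ?thesis
  proof cases
    case 1
    have "F t ^ d * (1 - F t) \<le> 1 / real d"
      using power_mult_one_minus_le[OF F01] dpos by (simp add: field_simps)
    then have "t * (F t ^ d * (1 - F t)) \<le> xs * (1 / real d)"
      using 1 t F01 by (intro mult_mono) auto
    then show ?thesis using xs(2) dpos by (simp add: field_simps)
  next
    case 2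
    then show ?thesis using xs(2) by simp
  next
    case 3
    have "F t > 0" using xs q monoD[OF regular_dist_mono[OF R], of xs t] 3 unfolding q_def by simp
    have "t * (1 - F t) / F t \<le> xs * (1 - q) / q"
      using regular_dist_revenue_odds_antimono[OF R, of xs t] 3 xs q by (simp add: q_def)
    then have "t * (1 - F t) \<le> xs * (1 - q) / q * F t"
      using \<open>F t > 0\<close> by (simp add: divide_le_eq)
    also have "\<dots> \<le> xs * (1 - q) / q"
      using F01 xs(2) q by (intro mult_left_le) (auto simp: q_def)
    also have "\<dots> \<le> 2 * xs / real d"
      using q xs(2) dpos by (simp add: q_def field_simps)
    finally have "t * (1 - F t) \<le> 2 * xs / real d" .
    moreover have "t * (1 - F t) * F t ^ d \<le> t * (1 - F t)"
      using t F01 3 by (intro mult_left_le power_le_one) auto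
    ultimately have "t * (1 - F t) * F t ^ d \<le> 2 * xs / real d" by linarith
    then show ?thesis by (simp add: algebra_simps)
  qed
qed

lemma worst_rev_upper_bound:
  assumes R: "regular_dist F f I" and G: "d_regular n E d" and d: "d \<ge> 2"
    and xs: "F xs = 1 - 1 / real d" "0 < xs" and p: "0 < p"
  shows "worst_rev n E F p \<le> ereal (real n * (2 * xs / real d))"
proof -
  obtain t where t: "0 \<le> t" "t * F t ^ d = p" and T: "(\<lambda>_. ereal t) \<in> equilibria n E F (\<lambda>_. p)"
    using symmetric_equilibrium_exists[OF R G p] .
  have "worst_rev n E F p \<le> ereal (revenue n F (\<lambda>_. p) (\<lambda>_. ereal t))"
    unfolding worst_rev_def using T by (rule INF_lower)
  also have "revenue n F (\<lambda>_. p) (\<lambda>_. ereal t) = real n * (t * F t ^ d * (1 - F t))"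
    unfolding revenue_def Fe_def using t by simp
  also have "\<dots> \<le> real n * (2 * xs / real d)"
    using symmetric_revenue_le[OF R d xs t(1)] by (intro mult_left_mono) auto
  finally show ?thesis by simp
qed

theorem theorem4p1:
  shows "\<exists>c::real. c > 0 \<and>
    (\<forall>(n::nat) (d::nat) E F f I.
       d \<ge> 2 \<longrightarrow> graph_on n E \<longrightarrow> d_regular n E d \<longrightarrow> regular_dist F f I \<longrightarrow>
       (let p = Finv F (1 - 1 / real d) * (1 - 1 / real d) ^ d in
        worst_rev n E F p \<ge> ereal c * (SUP p'\<in>{0<..}. worst_rev n E F p')))"
proof (intro exI[of _ "1 / 72"] conjI allI impI)
  fix n d E F f I
  assume d: "d \<ge> (2::nat)" and G: "graph_on n E" "d_regular n E d" and R: "regular_dist F f I"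
  define xs where "xs = Finv F (1 - 1 / real d)"
  define p where "p = xs * (1 - 1 / real d) ^ d"
  have xs: "F xs = 1 - 1 / real d" "0 < xs"
    using regular_dist_Finv[OF R, of "1 - 1 / real d"] d unfolding xs_def by auto
  have "ereal (1 / 72) * (SUP p'\<in>{0<..}. worst_rev n E F p')
      \<le> ereal (1 / 72) * ereal (real n * (2 * xs / real d))"
    using worst_rev_upper_bound[OF R G(2) d xs] by (intro ereal_mult_left_mono SUP_least) auto
  also have "\<dots> \<le> ereal (p * real n / (4 * real d))"
    using one_minus_inverse_power_ge_ninth[OF d] xs(2) d
    by (simp add: p_def field_simps mult_left_mono)
  also have "\<dots> \<le> worst_rev n E F p"
    unfolding worst_rev_def
    using equilibrium_revenue_lower_bound[OF R G d xs _ p_def] by (intro INF_greatest) simp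
  finally show "let p = Finv F (1 - 1 / real d) * (1 - 1 / real d) ^ d in
      ereal (1 / 72) * (SUP p'\<in>{0<..}. worst_rev n E F p') \<le> worst_rev n E F p"
    unfolding Let_def p_def xs_def .
qed simp

end
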